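(* Let $I$ be a proper ideal in $\mathbb{B}_n$ generated by $g_1,\dots,g_r\in\mathbb{B}_n$ with canonical representatives $G_1,\dots,G_r\in P=\mathbb{F}_2[X_1,\dots,X_n]$. Let $Z=(z_1,\dots,z_s)$ be a tuple of distinct Boolean indeterminates and $Z'=(Z_1,\dots,Z_s)$ the tuple of their canonical representatives. (a) The procedure $\mathrm{CHECK}$ (over $K=\mathbb{F}_2$) applied to $(G_1,\dots,G_r)$ and $Z'$ returns a weight tuple $W\in\mathbb{N}^n$ if and only if there exist $f_1,\dots,f_s\in\langle g_1,\dots,g_r\rangle_{\mathbb{F}_2}$ such that $(f_1,\dots,f_s)$ is a $Z$-separating tuple of Boolean polynomials in $I$. (b) In the situation of (a), for every term ordering $\sigma$ compatible with the grading given by $W$ there exist $f'_1,\dots,f'_s\in\langle g_1,\dots,g_r\rangle_{\mathbb{F}_2}$ with $\operatorname{LT}_\sigma(f'_i)=z_i$ for $i=1,\dots,s$.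
   Context: $\mathbb{I}_n=\langle X_1^2-X_1,\dots,X_n^2-X_n\rangle$, $\mathbb{B}_n=P/\mathbb{I}_n$, Boolean indeterminates $x_i=X_i+\mathbb{I}_n$. Every $f\in\mathbb{B}_n$ has a unique representative $F\in P$ that is a sum of square-free terms (canonical representative); for a term ordering $\sigma$ on $P$, $\operatorname{LT}_\sigma(f)=\operatorname{LT}_\sigma(F)+\mathbb{I}_n$. A tuple $(f_1,\dots,f_s)$ of Boolean polynomials in $I$ is $Z$-separating if there is a term ordering $\sigma$ with $\operatorname{LT}_\sigma(f_i)=z_i$ for all $i$. For $W\in\mathbb{N}^n$ the $W$-degree of $X_1^{a_1}\cdots X_n^{a_n}$ is $\sum w_ia_i$; a term ordering $\sigma$ is compatible with the grading given by $W$ if $t>_\sigma t'$ whenever the $W$-degree of $t$ exceeds that of $t'$. Below, $K$ is a field, $P=K[x_1,\dots,x_n]$ generically; here $K=\mathbb{F}_2$ and the indeterminates are $X_1,\dots,X_n$. $\operatorname{Supp}(f)$ is the set of terms of $f$; $\operatorname{Lin}(f)$ the homogeneous degree-1 component; $\langle\cdot\rangle_K$ the $K$-linear span. Procedure $\mathrm{LI}$ (linear interreduction), applied to a tuple $Z=(z_1,\dots,z_s)$ of distinct indeterminates and polynomials $g_1,\dots,g_r$: let $t_1>\dots>t_m$ (lexicographic order, $x_1>\dots>x_n$) be the terms of $\bigcup_j\operatorname{Supp}(g_j)$ other than $z_1,\dots,z_s$; form the coefficient matrix $M$ of $g_1,\dots,g_r$ w.r.t. column order $(z_1,\dots,z_s,t_1,\dots,t_m)$;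 output the polynomials whose coefficient vectors are the nonzero rows of the reduced row echelon form of $M$, in order. Procedure $\mathrm{CHECK}$ on input $(g_1,\dots,g_r)$ and $Z$: (1) set $w_1=\dots=w_n=0$, $\delta=\max_j\deg(g_j)$, $d=1$. (2) In each $g_j$ delete every monomial not divisible by some indeterminate of $Z$. (3) If $\dim_K\langle\operatorname{Lin}(g_1),\dots,\operatorname{Lin}(g_r)\rangle_K<\#Z$, return ``Fail''. (4) Repeat: (i) replace the current list $g_1,\dots,g_r$ by the output of $\mathrm{LI}$ applied to the current $Z$ and the current list; (ii) let $\widetilde Z$ be the set of indeterminates of the current $Z$ that occur as elements of the current list; (iii) if $\widetilde Z=\emptyset$, return ``Fail''; (iv) for each $z\in\widetilde Z$, say $z=x_k$, set $w_k=d$ and remove $z$ from $Z$; (v) in each current $g_j$ delete every monomial not divisible by some indeterminate of the (updated) $Z$; (vi) replace $d$ by $\delta d+1$; until $Z$ is empty. (5) Return $W=(w_1,\dots,w_n)$. *)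

theory Defs
  imports Main
begin

text \<open>Indeterminate X_(k+1) is represented by index k (0-based), k < n.
  A term (power product) of P is an exponent vector t :: nat => nat with t i = 0 for i >= n.
  A polynomial of P over F2 is the finite set of terms occurring in it (coefficient 1);
  addition is symmetric difference.\<close>

type_synonym pterm = "nat \<Rightarrow> nat"
type_synonym ppoly = "pterm set"

definition terms :: "nat \<Rightarrow> pterm set" where
  "terms n = {t. \<forall>i. n \<le> i \<longrightarrow> t i = 0}"

definition tone :: pterm where "tone = (\<lambda>_. 0)"

definition tmul :: "pterm \<Rightarrow> pterm \<Rightarrow> pterm" where
  "tmul s t = (\<lambda>i. s i + t i)"

definition tdeg :: "nat \<Rightarrow> pterm \<Rightarrow> nat" where
  "tdeg n t = (\<Sum>i<n. t i)"

definition wdeg :: "nat \<Rightarrow> (nat \<Rightarrow> nat) \<Rightarrow> pterm \<Rightarrow> nat" where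
  "wdeg n W t = (\<Sum>i<n. W i * t i)"

definition term_order :: "nat \<Rightarrow> (pterm \<Rightarrow> pterm \<Rightarrow> bool) \<Rightarrow> bool" where
  "term_order n lt \<longleftrightarrow>
     (\<forall>t\<in>terms n. \<not> lt t t) \<and>
     (\<forall>s\<in>terms n. \<forall>t\<in>terms n. \<forall>u\<in>terms n. lt s t \<longrightarrow> lt t u \<longrightarrow> lt s u) \<and>
     (\<forall>s\<in>terms n. \<forall>t\<in>terms n. s \<noteq> t \<longrightarrow> lt s t \<or> lt t s) \<and>
     (\<forall>s\<in>terms n. \<forall>t\<in>terms n. \<forall>u\<in>terms n. lt s t \<longrightarrow> lt (tmul s u) (tmul t u)) \<and>
     (\<forall>t\<in>terms n. t \<noteq> tone \<longrightarrow> lt tone t)"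

definition compatible :: "nat \<Rightarrow> (nat \<Rightarrow> nat) \<Rightarrow> (pterm \<Rightarrow> pterm \<Rightarrow> bool) \<Rightarrow> bool" where
  "compatible n W lt \<longleftrightarrow>
     (\<forall>t\<in>terms n. \<forall>t'\<in>terms n. wdeg n W t > wdeg n W t' \<longrightarrow> lt t' t)"

definition is_LT :: "(pterm \<Rightarrow> pterm \<Rightarrow> bool) \<Rightarrow> ppoly \<Rightarrow> pterm \<Rightarrow> bool" where
  "is_LT lt F t \<longleftrightarrow> t \<in> F \<and> (\<forall>s\<in>F. s \<noteq> t \<longrightarrow> lt s t)"

definition sdiff :: "'a set \<Rightarrow> 'a set \<Rightarrow> 'a set" where
  "sdiff a b = (a - b) \<union> (b - a)"

definition lsum :: "'a set list \<Rightarrow> 'a set" where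
  "lsum xs = foldr sdiff xs {}"

definition f2span :: "'a set list \<Rightarrow> 'a set set" where
  "f2span gs = {lsum (map2 (\<lambda>c g. if c then g else {}) cs gs) | cs. length cs = length gs}"

definition setsum2 :: "'a set set \<Rightarrow> 'a set" where
  "setsum2 C = {x. odd (card {c\<in>C. x \<in> c})}"

definition f2indep :: "'a set set \<Rightarrow> bool" where
  "f2indep B \<longleftrightarrow> finite B \<and> (\<forall>C\<subseteq>B. C \<noteq> {} \<longrightarrow> setsum2 C \<noteq> {})"

definition f2dim :: "'a set list \<Rightarrow> nat" where
  "f2dim gs = Max {card B | B. B \<subseteq> f2span gs \<and> f2indep B}"

text \<open>Elements of B_n are represented via their square-free terms: a square-free term is the
  (finite) set of indices of the indeterminates occurring in it; an element of B_n is the finite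
  set of square-free terms of its canonical representative.\<close>

type_synonym bpoly = "nat set set"

definition bpolys :: "nat \<Rightarrow> bpoly set" where
  "bpolys n = {f. finite f \<and> (\<forall>u\<in>f. u \<subseteq> {..<n})}"

text \<open>Multiplication in B_n (x_i^2 = x_i).\<close>
definition bmul :: "bpoly \<Rightarrow> bpoly \<Rightarrow> bpoly" where
  "bmul f g = {u. odd (card {(a, b). a \<in> f \<and> b \<in> g \<and> a \<union> b = u})}"

definition bideal :: "nat \<Rightarrow> bpoly list \<Rightarrow> bpoly set" where
  "bideal n gs = {lsum (map2 bmul hs gs) | hs. length hs = length gs \<and> set hs \<subseteq> bpolys n}"

definition sqterm :: "nat set \<Rightarrow> pterm" where
  "sqterm u = (\<lambda>i. if i \<in> u then 1 else 0)"

definition canon :: "bpoly \<Rightarrow> ppoly" where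
  "canon f = sqterm ` f"

definition var :: "nat \<Rightarrow> pterm" where
  "var k = sqterm {k}"

definition Z_separating :: "nat \<Rightarrow> bpoly set \<Rightarrow> nat list \<Rightarrow> bpoly list \<Rightarrow> bool" where
  "Z_separating n I zs fs \<longleftrightarrow> length fs = length zs \<and> set fs \<subseteq> I \<and>
     (\<exists>lt. term_order n lt \<and> (\<forall>i<length zs. is_LT lt (canon (fs ! i)) (var (zs ! i))))"

text \<open>Lexicographic order with x_1 > ... > x_n : t >lex u.\<close>
definition lex_gt :: "pterm \<Rightarrow> pterm \<Rightarrow> bool" where
  "lex_gt t u \<longleftrightarrow> (\<exists>i. u i < t i \<and> (\<forall>j<i. t j = u j))"

text \<open>Column order (z_1,...,z_s,t_1,...,t_m): column t comes strictly before column u.\<close>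
definition colless :: "nat list \<Rightarrow> pterm \<Rightarrow> pterm \<Rightarrow> bool" where
  "colless zs t u \<longleftrightarrow>
     (t \<in> var ` set zs \<and> u \<notin> var ` set zs) \<or>
     (\<exists>i j. i < j \<and> j < length zs \<and> t = var (zs ! i) \<and> u = var (zs ! j)) \<or>
     (t \<notin> var ` set zs \<and> u \<notin> var ` set zs \<and> lex_gt t u)"

definition is_pivot :: "nat list \<Rightarrow> ppoly \<Rightarrow> pterm \<Rightarrow> bool" where
  "is_pivot zs p t \<longleftrightarrow> t \<in> p \<and> (\<forall>u\<in>p. u \<noteq> t \<longrightarrow> colless zs t u)"

text \<open>rs is the list of nonzero rows (top to bottom) of the reduced row echelon form of the
  coefficient matrix of gs w.r.t. the column order given by zs.\<close>
definition is_rref_rows :: "nat list \<Rightarrow> ppoly list \<Rightarrow> ppoly list \<Rightarrow> bool" where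
  "is_rref_rows zs gs rs \<longleftrightarrow>
     f2span rs = f2span gs \<and>
     (\<forall>r\<in>set rs. r \<noteq> {}) \<and>
     (\<forall>i j. i < j \<and> j < length rs \<longrightarrow>
        (\<exists>ti tj. is_pivot zs (rs ! i) ti \<and> is_pivot zs (rs ! j) tj \<and> colless zs ti tj)) \<and>
     (\<forall>i<length rs. \<forall>j<length rs. i \<noteq> j \<longrightarrow> (\<forall>t. is_pivot zs (rs ! i) t \<longrightarrow> t \<notin> rs ! j))"

definition LI :: "nat list \<Rightarrow> ppoly list \<Rightarrow> ppoly list" where
  "LI zs gs = (THE rs. is_rref_rows zs gs rs)"

definition keep_div :: "nat list \<Rightarrow> ppoly \<Rightarrow> ppoly" where
  "keep_div zs g = {t\<in>g. \<exists>z\<in>set zs. 0 < t z}"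

definition Lin :: "nat \<Rightarrow> ppoly \<Rightarrow> ppoly" where
  "Lin n g = {t\<in>g. tdeg n t = 1}"

text \<open>The loop (step 4) of CHECK; None means "Fail".\<close>
function check_loop :: "nat \<Rightarrow> nat list \<Rightarrow> ppoly list \<Rightarrow> nat \<Rightarrow> (nat \<Rightarrow> nat) \<Rightarrow> (nat \<Rightarrow> nat) option"
where
  "check_loop \<delta> zs gs d w =
    (if zs = [] then Some w
     else (let gs' = LI zs gs;
               zt = filter (\<lambda>z. {var z} \<in> set gs') zs
           in if zt = [] then None
              else check_loop \<delta> (filter (\<lambda>z. z \<notin> set zt) zs)
                     (map (keep_div (filter (\<lambda>z. z \<notin> set zt) zs)) gs')
                     (\<delta> * d + 1) (\<lambda>k. if k \<in> set zt then d else w k)))"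
  by pat_completeness auto
termination
proof (relation "measure (\<lambda>(\<delta>, zs, gs, d, w). length zs)")
  fix \<delta> zs gs d w gs' zt
  assume "zs \<noteq> []" "gs' = LI zs gs" "zt = filter (\<lambda>z. {var z} \<in> set gs') zs" "zt \<noteq> []"
  then obtain z where "z \<in> set zs" "z \<in> set zt" by (metis last_in_set filter_is_subset subsetD)
  then show "((\<delta>, filter (\<lambda>z. z \<notin> set zt) zs, map (keep_div (filter (\<lambda>z. z \<notin> set zt) zs)) gs',
          \<delta> * d + 1, \<lambda>k. if k \<in> set zt then d else w k), \<delta>, zs, gs, d, w)
         \<in> measure (\<lambda>(\<delta>, zs, gs, d, w). length zs)"
    by (auto intro!: length_filter_less)
qed auto

text \<open>Procedure CHECK over F2, for polynomials in n indeterminates; None means "Fail",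
  Some W returns the weight tuple W = (W 0, ..., W (n-1)).\<close>
definition CHECK :: "nat \<Rightarrow> ppoly list \<Rightarrow> nat list \<Rightarrow> (nat \<Rightarrow> nat) option" where
  "CHECK n gs zs =
    (let \<delta> = Max (insert 0 (tdeg n ` \<Union>(set gs)));
         gs1 = map (keep_div zs) gs
     in if f2dim (map (Lin n) gs1) < length zs then None
        else check_loop \<delta> zs gs1 1 (\<lambda>_. 0))"

end

theory Submission
  imports Defs
begin

text \<open>
  Vectors over F2 are sets of terms, and Gaussian elimination on them produces a unique reduced
  row echelon form, so that the procedure LI is well defined.

  If some term ordering makes the indeterminates of Z leading terms of polynomials f_z in the
  span, then in every round of CHECK the polynomial f_z of the smallest remaining z shrinks to z
  once all monomials not divisible by a remaining indeterminate are deleted; so {z} is a row of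
  the echelon form and the loop never fails. The linear parts of the f_z are independent, being
  triangular with respect to the ordering, so the dimension test passes as well.

  Conversely, each z removed in a round of CHECK comes with a polynomial of the span containing
  z whose other terms avoid the indeterminates still in Z and, having degree at most delta,
  only involve indeterminates of weight less than d / delta. As the current weight d is assigned
  to z, every other term has smaller W-degree, so any term ordering compatible with W, such as
  the W-graded one, makes z the leading term.
\<close>

lemma finite_has_least:
  assumes "finite S" "S \<noteq> {}" "S \<subseteq> A"
    and trans: "\<And>x y z. x \<in> A \<Longrightarrow> y \<in> A \<Longrightarrow> z \<in> A \<Longrightarrow> R x y \<Longrightarrow> R y z \<Longrightarrow> R x z"
    and total: "\<And>x y. x \<in> A \<Longrightarrow> y \<in> A \<Longrightarrow> x \<noteq> y \<Longrightarrow> R x y \<or> R y x"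
  shows "\<exists>m\<in>S. \<forall>x\<in>S. x \<noteq> m \<longrightarrow> R m x"
  using assms(1-3)
proof (induction S rule: finite_ne_induct)
  case (singleton x)
  then show ?case by simp
next
  case (insert a F)
  then obtain b where b: "b \<in> F" "\<forall>x\<in>F. x \<noteq> b \<longrightarrow> R b x"
    by blast
  have A: "a \<in> A" "F \<subseteq> A" and "a \<noteq> b"
    using insert b(1) by auto
  then consider "R a b" | "R b a"
    using total b(1) by blast
  then show ?case
  proof cases
    case 1
    have "R a x" if "x \<in> F" for x
    proof (cases "x = b")
      case False
      with that b have "R b x" by blast
      with 1 show ?thesis
        using trans[of a b x] A that b(1) by blast
    qed (use 1 in simp)
    then show ?thesis by blast
  next
    case 2
    then show ?thesis using b by blast
  qed
qed

lemma distinct_pairs_nth: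
  assumes "distinct xs"
  shows "(\<forall>i<length xs. \<forall>j<length xs. i \<noteq> j \<longrightarrow> P (xs ! i) (xs ! j)) \<longleftrightarrow>
    (\<forall>x\<in>set xs. \<forall>y\<in>set xs. x \<noteq> y \<longrightarrow> P x y)"
proof
  assume "\<forall>i<length xs. \<forall>j<length xs. i \<noteq> j \<longrightarrow> P (xs ! i) (xs ! j)"
  then show "\<forall>x\<in>set xs. \<forall>y\<in>set xs. x \<noteq> y \<longrightarrow> P x y"
    by (metis in_set_conv_nth)
next
  assume "\<forall>x\<in>set xs. \<forall>y\<in>set xs. x \<noteq> y \<longrightarrow> P x y"
  then show "\<forall>i<length xs. \<forall>j<length xs. i \<noteq> j \<longrightarrow> P (xs ! i) (xs ! j)"
    using assms by (auto simp: nth_eq_iff_index_eq)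
qed

section \<open>Linear algebra over F2 on sets\<close>

lemma mem_sdiff [simp]: "x \<in> sdiff a b \<longleftrightarrow> (x \<in> a) \<noteq> (x \<in> b)"
  by (auto simp: sdiff_def)

lemma sdiff_empty [simp]: "sdiff a {} = a" "sdiff {} a = a" "sdiff a a = {}"
  by (auto simp: sdiff_def)

lemma sdiff_cancel [simp]: "sdiff a (sdiff a b) = b"
  by auto

lemma lsum_Nil [simp]: "lsum [] = {}"
  and lsum_Cons [simp]: "lsum (x # xs) = sdiff x (lsum xs)"
  by (simp_all add: lsum_def)

lemma f2span_Nil: "f2span [] = {{}}"
  by (auto simp: f2span_def)

lemma f2span_Cons: "f2span (g # gs) = f2span gs \<union> sdiff g ` f2span gs"
proof (intro equalityI subsetI)
  fix x assume "x \<in> f2span (g # gs)"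
  then obtain c cs where "length cs = length gs"
    "x = lsum (map2 (\<lambda>c g. if c then g else {}) (c # cs) (g # gs))"
    unfolding f2span_def by (auto simp: length_Suc_conv)
  then show "x \<in> f2span gs \<union> sdiff g ` f2span gs"
    unfolding f2span_def by (cases c) auto
next
  fix x assume "x \<in> f2span gs \<union> sdiff g ` f2span gs"
  then obtain y c where "y \<in> f2span gs" "x = (if c then sdiff g y else y)"
    by (metis (full_types) UnE imageE)
  then obtain cs where "length (c # cs) = length (g # gs)"
    "x = lsum (map2 (\<lambda>c g. if c then g else {}) (c # cs) (g # gs))"
    unfolding f2span_def by auto
  then show "x \<in> f2span (g # gs)"
    unfolding f2span_def by blast
qed

lemma empty_in_f2span [simp]: "{} \<in> f2span gs"
  by (induction gs) (auto simp: f2span_Nil f2span_Cons)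

lemma f2span_sdiff_closed: "a \<in> f2span gs \<Longrightarrow> b \<in> f2span gs \<Longrightarrow> sdiff a b \<in> f2span gs"
proof (induction gs arbitrary: a b)
  case Nil
  then show ?case by (simp add: f2span_Nil)
next
  case (Cons g gs)
  from Cons.prems obtain a' b' p q where
    a: "a' \<in> f2span gs" "a = (if p then sdiff g a' else a')" and
    b: "b' \<in> f2span gs" "b = (if q then sdiff g b' else b')"
    unfolding f2span_Cons by (metis (full_types) UnE imageE)
  have "sdiff a b = (if p = q then sdiff a' b' else sdiff g (sdiff a' b'))"
    using a(2) b(2) by auto
  then show ?case
    using Cons.IH[OF a(1) b(1)] unfolding f2span_Cons by auto
qed

lemma generator_in_f2span: "g \<in> set gs \<Longrightarrow> g \<in> f2span gs"
  by (induction gs) (auto simp: f2span_Cons intro: image_eqI[of _ _ "{}"])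

lemma f2span_least:
  assumes "{} \<in> S" "\<And>a b. a \<in> S \<Longrightarrow> b \<in> S \<Longrightarrow> sdiff a b \<in> S" "set gs \<subseteq> S"
  shows "f2span gs \<subseteq> S"
  using assms(3) by (induction gs) (auto simp: f2span_Nil f2span_Cons assms(1,2))

lemma f2span_subset_f2span: "set gs \<subseteq> f2span hs \<Longrightarrow> f2span gs \<subseteq> f2span hs"
  by (rule f2span_least) (auto intro: f2span_sdiff_closed)

lemma f2span_eq_f2span:
  "set gs \<subseteq> f2span hs \<Longrightarrow> set hs \<subseteq> f2span gs \<Longrightarrow> f2span gs = f2span hs"
  by (simp add: f2span_subset_f2span subset_antisym)

lemma f2span_cong_set: "set gs = set hs \<Longrightarrow> f2span gs = f2span hs"
  by (metis f2span_eq_f2span generator_in_f2span subsetI)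

lemma f2span_Cons_cong: "f2span gs = f2span hs \<Longrightarrow> f2span (g # gs) = f2span (g # hs)"
  by (simp add: f2span_Cons)

lemma f2span_Cons_sdiff:
  assumes "v \<in> f2span gs"
  shows "f2span (sdiff g v # gs) = f2span (g # gs)"
proof (rule f2span_eq_f2span)
  have sub: "set gs \<subseteq> f2span (h # gs)" "v \<in> f2span (h # gs)" "h \<in> f2span (h # gs)" for h
    using assms by (auto simp: f2span_Cons generator_in_f2span)
  have "g = sdiff (sdiff g v) v" by auto
  then show "set (g # gs) \<subseteq> f2span (sdiff g v # gs)"
    using sub[of "sdiff g v"] by (metis f2span_sdiff_closed insert_subset list.simps(15))
  show "set (sdiff g v # gs) \<subseteq> f2span (g # gs)"
    using sub[of g] by (simp add: f2span_sdiff_closed)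
qed

lemma f2span_Cons_absorb: "g \<in> f2span gs \<Longrightarrow> f2span (g # gs) = f2span gs"
  using f2span_Cons_sdiff[of g gs g] by (simp add: f2span_Cons)

lemma f2span_Cons_map_sdiff:
  assumes "\<And>r. r \<in> set R \<Longrightarrow> h r = r \<or> h r = sdiff r g"
  shows "f2span (g # map h R) = f2span (g # R)"
proof (rule f2span_eq_f2span)
  have g: "g \<in> f2span (g # L)" and L: "x \<in> set L \<Longrightarrow> x \<in> f2span (g # L)" for L x
    by (simp_all add: generator_in_f2span)
  have "r \<in> f2span (g # map h R) \<and> h r \<in> f2span (g # R)" if r: "r \<in> set R" for r
  proof -
    have "h r \<in> f2span (g # map h R)" "r \<in> f2span (g # R)"
      using r by (auto intro: L)
    moreover have "r = sdiff (h r) g" if "h r = sdiff r g"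
      using that by auto
    ultimately show ?thesis
      using assms[OF r] f2span_sdiff_closed[OF _ g] by metis
  qed
  then show "set (g # map h R) \<subseteq> f2span (g # R)" "set (g # R) \<subseteq> f2span (g # map h R)"
    using g by auto
qed

lemma f2span_map_linear:
  assumes "h {} = {}" "\<And>a b. h (sdiff a b) = sdiff (h a) (h b)"
  shows "f2span (map h gs) = h ` f2span gs"
proof (induction gs)
  case Nil
  then show ?case by (simp add: f2span_Nil assms(1))
next
  case (Cons g gs)
  have "sdiff (h g) ` h ` f2span gs = h ` sdiff g ` f2span gs"
    by (auto simp: image_image assms(2))
  then show ?case using Cons by (simp add: f2span_Cons image_Un)
qed

lemma finite_f2span: "finite (f2span gs)"
  by (induction gs) (auto simp: f2span_Nil f2span_Cons)

lemma f2span_subset_Union: "v \<in> f2span gs \<Longrightarrow> v \<subseteq> \<Union>(set gs)"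
proof (induction gs arbitrary: v)
  case Nil
  then show ?case by (simp add: f2span_Nil)
next
  case (Cons g gs)
  then show ?case unfolding f2span_Cons by fastforce
qed

lemma finite_f2span_elem: "v \<in> f2span gs \<Longrightarrow> \<forall>g\<in>set gs. finite g \<Longrightarrow> finite v"
  by (meson List.finite_set finite_Union finite_subset f2span_subset_Union)

lemma setsum2_empty [simp]: "setsum2 {} = {}"
  by (simp add: setsum2_def)

lemma setsum2_insert:
  assumes "finite C" "r \<notin> C"
  shows "setsum2 (insert r C) = sdiff r (setsum2 C)"
proof (rule set_eqI)
  fix x
  have "{c\<in>insert r C. x \<in> c} = (if x \<in> r then insert r {c\<in>C. x \<in> c} else {c\<in>C. x \<in> c})"
    by auto
  then show "x \<in> setsum2 (insert r C) \<longleftrightarrow> x \<in> sdiff r (setsum2 C)"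
    using assms by (simp add: setsum2_def)
qed

lemma setsum2_singleton [simp]: "setsum2 {r} = r"
  using setsum2_insert[of "{}" r] by simp

lemma setsum2_subset_Union: "setsum2 C \<subseteq> \<Union>C"
proof
  fix x assume "x \<in> setsum2 C"
  then have "{c\<in>C. x \<in> c} \<noteq> {}"
    unfolding setsum2_def by (intro notI) simp
  then show "x \<in> \<Union>C" by blast
qed

lemma setsum2_in_f2span: "finite C \<Longrightarrow> C \<subseteq> f2span gs \<Longrightarrow> setsum2 C \<in> f2span gs"
  by (induction C rule: finite_induct) (auto simp: setsum2_insert f2span_sdiff_closed)

lemma f2span_setsum2: "v \<in> f2span gs \<Longrightarrow> \<exists>C\<subseteq>set gs. v = setsum2 C"
proof (induction gs arbitrary: v)
  case Nil
  then show ?case by (auto simp: f2span_Nil)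
next
  case (Cons g gs)
  from Cons.prems consider "v \<in> f2span gs" | u where "u \<in> f2span gs" "v = sdiff g u"
    unfolding f2span_Cons by blast
  then show ?case
  proof cases
    case 1
    then obtain C where "C \<subseteq> set gs" "v = setsum2 C"
      using Cons.IH by blast
    then show ?thesis by (intro exI[of _ C]) auto
  next
    case 2
    then obtain C where C: "C \<subseteq> set gs" "v = sdiff g (setsum2 C)"
      using Cons.IH by blast
    have fin: "finite C" using C(1) finite_subset by blast
    show ?thesis
    proof (cases "g \<in> C")
      case True
      then have "v = setsum2 (C - {g})"
        using C(2) fin setsum2_insert[of "C - {g}" g] by (simp add: insert_absorb)
      then show ?thesis using C(1) by (intro exI[of _ "C - {g}"]) auto
    next
      case False
      then have "v = setsum2 (insert g C)"
        using C(2) fin by (simp add: setsum2_insert)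
      then show ?thesis using C(1) by (intro exI[of _ "insert g C"]) auto
    qed
  qed
qed

lemma f2indep_card_le_f2dim:
  assumes "B \<subseteq> f2span gs" "f2indep B"
  shows "card B \<le> f2dim gs"
proof -
  have "finite {card B | B. B \<subseteq> f2span gs \<and> f2indep B}"
    by (rule finite_subset[of _ "card ` Pow (f2span gs)"]) (auto simp: finite_f2span)
  moreover have "card B \<in> {card B | B. B \<subseteq> f2span gs \<and> f2indep B}"
    using assms by blast
  ultimately show ?thesis
    unfolding f2dim_def by (rule Max_ge)
qed

section \<open>Column order and reduced row echelon form\<close>

lemma lex_gt_irrefl: "\<not> lex_gt t t"
  by (auto simp: lex_gt_def)

lemma lex_gt_trans:
  assumes "lex_gt a b" "lex_gt b c"
  shows "lex_gt a c"
proof -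
  obtain i j where i: "b i < a i" "\<forall>k<i. a k = b k" and j: "c j < b j" "\<forall>k<j. b k = c k"
    using assms by (auto simp: lex_gt_def)
  show ?thesis
  proof (cases "i < j")
    case True
    with i j show ?thesis
      unfolding lex_gt_def by (intro exI[of _ i]) auto
  next
    case False
    with i j show ?thesis
      unfolding lex_gt_def by (intro exI[of _ j]) (cases "i = j"; auto)
  qed
qed

lemma lex_gt_total: "a \<noteq> b \<Longrightarrow> lex_gt a b \<or> lex_gt b a"
proof -
  assume "a \<noteq> b"
  then have ex: "\<exists>i. a i \<noteq> b i" by auto
  define i where "i = (LEAST i. a i \<noteq> b i)"
  have "a i \<noteq> b i" "\<forall>k<i. a k = b k"
    using LeastI_ex[OF ex] not_less_Least unfolding i_def by blast+
  then show ?thesis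
    unfolding lex_gt_def by (metis linorder_neqE_nat)
qed

lemma lex_gt_tmul: "lex_gt (tmul t s) (tmul u s) \<longleftrightarrow> lex_gt t u"
  by (simp add: lex_gt_def tmul_def)

lemma var_apply: "var z i = (if i = z then 1 else 0)"
  by (simp add: var_def sqterm_def)

lemma var_inject: "var a = var b \<longleftrightarrow> a = b"
proof
  assume "var a = var b"
  then have "var a a = var b a" by simp
  then show "a = b" by (simp add: var_apply split: if_splits)
qed simp

locale column_order =
  fixes zs :: "nat list"
  assumes distinct_zs: "distinct zs"
begin

lemma colless_cases:
  assumes "colless zs t u"
  obtains "t \<in> var ` set zs" "u \<notin> var ` set zs"
  | i j where "i < j" "j < length zs" "t = var (zs ! i)" "u = var (zs ! j)"
  | "t \<notin> var ` set zs" "u \<notin> var ` set zs" "lex_gt t u"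
  using assms unfolding colless_def by metis

lemma var_nth_inject: "i < length zs \<Longrightarrow> j < length zs \<Longrightarrow> var (zs ! i) = var (zs ! j) \<longleftrightarrow> i = j"
  using distinct_zs by (simp add: var_inject nth_eq_iff_index_eq)

lemma colless_irrefl: "\<not> colless zs t t"
  by (auto elim: colless_cases simp: var_nth_inject lex_gt_irrefl)

lemma colless_trans:
  assumes "colless zs a b" "colless zs b c"
  shows "colless zs a c"
  using assms(1)
proof (cases rule: colless_cases)
  case 1
  from assms(2) have "c \<notin> var ` set zs"
    by (cases rule: colless_cases) (use 1 in auto)
  with 1 show ?thesis by (simp add: colless_def)
next
  case (2 i j)
  note ij = this
  from assms(2) show ?thesis
  proof (cases rule: colless_cases)
    case (2 k l)
    with ij have "k = j"
      using var_nth_inject[of k j] by simp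
    with 2 ij have "i < l" by simp
    with 2 ij show ?thesis
      unfolding colless_def by blast
  qed (use ij in \<open>auto simp: colless_def\<close>)
next
  case 3
  from assms(2) show ?thesis
    by (cases rule: colless_cases) (use 3 lex_gt_trans in \<open>auto simp: colless_def\<close>)
qed

lemma colless_total: "a \<noteq> b \<Longrightarrow> colless zs a b \<or> colless zs b a"
proof -
  assume ab: "a \<noteq> b"
  show ?thesis
  proof (cases "a \<in> var ` set zs \<and> b \<in> var ` set zs")
    case True
    then obtain i j where "i < length zs" "j < length zs" "a = var (zs ! i)" "b = var (zs ! j)"
      by (metis imageE in_set_conv_nth)
    with ab show ?thesis
      unfolding colless_def by (metis linorder_neqE_nat)
  next
    case False
    then show ?thesis
      using lex_gt_total[OF ab] unfolding colless_def by blast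
  qed
qed

lemma colless_asym: "colless zs s t \<Longrightarrow> \<not> colless zs t s"
  using colless_irrefl colless_trans by blast

lemma colless_linorder: "class.linorder (\<lambda>s t. s = t \<or> colless zs s t) (colless zs)"
proof
  fix x y z
  show "colless zs x y \<longleftrightarrow> (x = y \<or> colless zs x y) \<and> \<not> (y = x \<or> colless zs y x)"
    using colless_asym colless_irrefl by blast
  show "x = x \<or> colless zs x x" by simp
  show "x = y \<or> colless zs x y \<Longrightarrow> y = z \<or> colless zs y z \<Longrightarrow> x = z \<or> colless zs x z"
    using colless_trans by blast
  show "x = y \<or> colless zs x y \<Longrightarrow> y = x \<or> colless zs y x \<Longrightarrow> x = y"
    using colless_asym by blast
  show "(x = y \<or> colless zs x y) \<or> (y = x \<or> colless zs y x)"
    using colless_total by blast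
qed

lemma colless_least:
  assumes "finite S" "S \<noteq> {}"
  shows "\<exists>m\<in>S. \<forall>x\<in>S. x \<noteq> m \<longrightarrow> colless zs m x"
proof (rule finite_has_least[OF assms subset_UNIV])
  show "colless zs x z" if "x \<in> UNIV" "y \<in> UNIV" "z \<in> UNIV" "colless zs x y" "colless zs y z"
    for x y z
    using that(4,5) by (rule colless_trans)
  show "colless zs x y \<or> colless zs y x" if "x \<in> UNIV" "y \<in> UNIV" "x \<noteq> y" for x y
    using that(3) by (rule colless_total)
qed

lemma pivot_unique:
  assumes "is_pivot zs p t" "is_pivot zs p t'"
  shows "t = t'"
proof (rule ccontr)
  assume "t \<noteq> t'"
  with assms have "colless zs t t'" "colless zs t' t"
    unfolding is_pivot_def by auto
  then show False using colless_asym by blast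
qed

definition piv :: "ppoly \<Rightarrow> pterm" where
  "piv p = (THE t. is_pivot zs p t)"

lemma is_pivot_piv:
  assumes "finite p" "p \<noteq> {}"
  shows "is_pivot zs p (piv p)"
proof -
  obtain t where "t \<in> p" "\<And>u. u \<in> p \<Longrightarrow> u \<noteq> t \<Longrightarrow> colless zs t u"
    using colless_least[OF assms] by blast
  then have "is_pivot zs p t"
    unfolding is_pivot_def by blast
  then show ?thesis
    unfolding piv_def using theI[of "is_pivot zs p" t] pivot_unique by blast
qed

lemma piv_eqI: "is_pivot zs p t \<Longrightarrow> piv p = t"
  unfolding piv_def using pivot_unique by blast

definition reduced :: "ppoly set \<Rightarrow> bool" where
  "reduced Rs \<longleftrightarrow> (\<forall>r\<in>Rs. finite r \<and> r \<noteq> {}) \<and> (\<forall>r\<in>Rs. \<forall>r'\<in>Rs. r \<noteq> r' \<longrightarrow> piv r \<notin> r')"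

definition rref :: "ppoly list \<Rightarrow> bool" where
  "rref R \<longleftrightarrow> reduced (set R) \<and> sorted_wrt (colless zs) (map piv R)"

lemma reduced_is_pivot: "reduced Rs \<Longrightarrow> r \<in> Rs \<Longrightarrow> is_pivot zs r (piv r)"
  unfolding reduced_def using is_pivot_piv by blast

lemma reduced_piv_in: "reduced Rs \<Longrightarrow> r \<in> Rs \<Longrightarrow> piv r \<in> r"
  using reduced_is_pivot is_pivot_def by blast

lemma reduced_piv_notin: "reduced Rs \<Longrightarrow> r \<in> Rs \<Longrightarrow> r' \<in> Rs \<Longrightarrow> r \<noteq> r' \<Longrightarrow> piv r \<notin> r'"
  unfolding reduced_def by blast

lemma reduced_inj_piv: "reduced Rs \<Longrightarrow> inj_on piv Rs"
  by (rule inj_onI) (use reduced_piv_in reduced_piv_notin in fastforce)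

lemma reduced_piv_in_setsum2:
  assumes "reduced Rs" "C \<subseteq> Rs" "r \<in> Rs"
  shows "piv r \<in> setsum2 C \<longleftrightarrow> r \<in> C"
proof -
  have "{c\<in>C. piv r \<in> c} = (if r \<in> C then {r} else {})"
    using assms(2) reduced_piv_in[OF assms(1,3)] reduced_piv_notin[OF assms(1,3)] by auto
  then show ?thesis
    unfolding setsum2_def by simp
qed

text \<open>The pivot is the least pivot among the rows summing to the vector.\<close>
lemma reduced_piv_f2span:
  assumes R: "reduced (set R)" and v: "v \<in> f2span R" "v \<noteq> {}"
  shows "\<exists>r\<in>set R. is_pivot zs v (piv r)"
proof -
  obtain C where C: "C \<subseteq> set R" "v = setsum2 C"
    using f2span_setsum2[OF v(1)] by blast
  have "finite C"
    using C(1) by (rule finite_subset) simp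
  moreover have "C \<noteq> {}"
  proof
    assume "C = {}"
    with C(2) v(2) show False by simp
  qed
  ultimately have "\<exists>p\<in>piv ` C. \<forall>x\<in>piv ` C. x \<noteq> p \<longrightarrow> colless zs p x"
    by (intro colless_least) simp_all
  then obtain p where p: "p \<in> piv ` C" "\<And>x. x \<in> piv ` C \<Longrightarrow> x \<noteq> p \<Longrightarrow> colless zs p x"
    by blast
  then obtain r0 where r0: "r0 \<in> C" "p = piv r0"
    by blast
  have "is_pivot zs v (piv r0)"
    unfolding is_pivot_def
  proof (intro conjI ballI impI)
    show "piv r0 \<in> v"
      using reduced_piv_in_setsum2[OF R C(1), of r0] r0(1) C by blast
  next
    fix t assume t: "t \<in> v" "t \<noteq> piv r0"
    have "t \<in> \<Union>C"
      using setsum2_subset_Union[of C] C(2) t(1) by (simp add: subset_iff)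
    then obtain c where c: "c \<in> C" "t \<in> c"
      by blast
    then have "t = piv c \<or> colless zs (piv c) t"
      using reduced_is_pivot[OF R, of c] C(1) unfolding is_pivot_def by blast
    moreover have "piv c = piv r0 \<or> colless zs (piv r0) (piv c)"
      using p(2)[of "piv c"] c(1) r0(2) by blast
    ultimately show "colless zs (piv r0) t"
      using t(2) colless_trans[of "piv r0" "piv c" t] by auto
  qed
  then show ?thesis using r0(1) C(1) by blast
qed

lemma setsum2_same_piv_in_reduced:
  assumes R: "reduced Rs" and C: "C \<subseteq> Rs" "C \<noteq> {}" and p: "\<And>c. c \<in> C \<Longrightarrow> piv c = p"
  shows "setsum2 C \<in> Rs"
proof -
  obtain c0 where c0: "c0 \<in> C" using C(2) by blast
  have "c = c0" if "c \<in> C" for c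
    by (rule inj_onD[OF reduced_inj_piv[OF R]]) (use p that c0 C(1) in auto)
  then have "C = {c0}"
    using c0 by blast
  then show ?thesis using c0 C(1) by auto
qed

lemma reduced_singleton:
  assumes R: "reduced (set R)" and t: "{t} \<in> f2span R"
  shows "{t} \<in> set R"
proof -
  obtain C where C: "C \<subseteq> set R" "{t} = setsum2 C"
    using f2span_setsum2[OF t] by blast
  have "piv c \<in> setsum2 C" if "c \<in> C" for c
    using reduced_piv_in_setsum2[OF R C(1), of c] that C(1) by auto
  then have "piv c = t" if "c \<in> C" for c
    using that unfolding C(2)[symmetric] by blast
  moreover have "C \<noteq> {}"
    using C(2) by auto
  ultimately have "setsum2 C \<in> set R"
    by (intro setsum2_same_piv_in_reduced[OF R C(1)])
  with C(2) show ?thesis by simp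
qed

lemma reduced_f2span_subset:
  assumes R: "reduced (set R)" and R': "reduced (set R')" and sp: "f2span R = f2span R'"
  shows "set R \<subseteq> set R'"
proof
  fix r assume r: "r \<in> set R"
  then have "r \<in> f2span R'"
    using generator_in_f2span[OF r] sp by simp
  from f2span_setsum2[OF this] obtain C where C: "C \<subseteq> set R'" "r = setsum2 C"
    by blast
  have "piv c = piv r" if c: "c \<in> C" for c
  proof -
    have "c \<in> f2span R"
      using generator_in_f2span[of c R'] c C(1) sp by auto
    moreover have "c \<noteq> {}"
      using R' c C(1) unfolding reduced_def by auto
    ultimately obtain r'' where r'': "r'' \<in> set R" "is_pivot zs c (piv r'')"
      using reduced_piv_f2span[OF R] by blast
    have "piv c \<in> r"
      using reduced_piv_in_setsum2[OF R' C(1), of c] c C by auto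
    moreover have "piv c = piv r''"
      using r''(2) by (rule piv_eqI)
    ultimately have "r'' = r"
      using reduced_piv_notin[OF R r''(1) r] by auto
    with \<open>piv c = piv r''\<close> show ?thesis by simp
  qed
  moreover have "C \<noteq> {}"
    using C(2) R r unfolding reduced_def by auto
  ultimately have "setsum2 C \<in> set R'"
    by (intro setsum2_same_piv_in_reduced[OF R' C(1)])
  with C(2) show "r \<in> set R'" by simp
qed

lemma rref_unique:
  assumes R: "rref R" and R': "rref R'" and sp: "f2span R = f2span R'"
  shows "R = R'"
proof -
  have red: "reduced (set R)" "reduced (set R')"
    using R R' unfolding rref_def by auto
  have set_eq: "set R = set R'"
    using reduced_f2span_subset[OF red sp] reduced_f2span_subset[OF red(2,1) sp[symmetric]]
    by (rule subset_antisym)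
  have "sorted_wrt (colless zs) (map piv R)" "sorted_wrt (colless zs) (map piv R')"
    using R R' unfolding rref_def by auto
  then have "map piv R' = map piv R"
    by (rule linorder.strict_sorted_equal[OF colless_linorder]) (simp add: set_eq)
  then have "R' = R"
    by (rule map_inj_on) (simp add: set_eq reduced_inj_piv[OF red(2)])
  then show ?thesis by simp
qed

lemma reduced_reduce:
  assumes R: "reduced (set R)"
  shows "\<exists>v\<in>f2span R. \<forall>r\<in>set R. piv r \<notin> sdiff g v"
proof
  define S where "S = {r\<in>set R. piv r \<in> g}"
  show "setsum2 S \<in> f2span R"
    unfolding S_def by (intro setsum2_in_f2span) (auto intro: generator_in_f2span)
  show "\<forall>r\<in>set R. piv r \<notin> sdiff g (setsum2 S)"
  proof
    fix r assume r: "r \<in> set R"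
    then have "piv r \<in> setsum2 S \<longleftrightarrow> r \<in> S"
      by (intro reduced_piv_in_setsum2[OF R]) (auto simp: S_def)
    with r show "piv r \<notin> sdiff g (setsum2 S)"
      by (simp add: S_def)
  qed
qed

lemma is_pivot_sdiff:
  assumes r: "is_pivot zs r t" and g: "is_pivot zs g p" and "t \<notin> g" "p \<in> r"
  shows "is_pivot zs (sdiff r g) t"
  unfolding is_pivot_def
proof (intro conjI ballI impI)
  show "t \<in> sdiff r g"
    using r \<open>t \<notin> g\<close> unfolding is_pivot_def by simp
  have "t \<noteq> p" using g \<open>t \<notin> g\<close> unfolding is_pivot_def by blast
  then have tp: "colless zs t p"
    using r \<open>p \<in> r\<close> unfolding is_pivot_def by auto
  fix u assume "u \<in> sdiff r g" "u \<noteq> t"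
  then consider "u \<in> r" | "u = p" | "u \<in> g" "u \<noteq> p"
    by auto
  then show "colless zs t u"
  proof cases
    case 3
    then have "colless zs p u" using g unfolding is_pivot_def by blast
    then show ?thesis using tp colless_trans by blast
  qed (use r \<open>u \<noteq> t\<close> tp in \<open>auto simp: is_pivot_def\<close>)
qed

text \<open>One step of Gaussian elimination: a new row without pivots of the old rows is
  eliminated from them at its own pivot.\<close>
lemma reduced_Cons_row:
  assumes R: "reduced (set R)" and g: "finite g" "g \<noteq> {}" "\<forall>r\<in>set R. piv r \<notin> g"
  shows "\<exists>R'. reduced (set R') \<and> f2span R' = f2span (g # R)"
proof -
  define p where "p = piv g"
  have pg: "is_pivot zs g p"
    unfolding p_def using is_pivot_piv g by blast
  define upd where "upd r = (if p \<in> r then sdiff r g else r)" for r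
  have upd_sub: "upd r \<subseteq> r \<union> g" and p_upd: "p \<notin> upd r" for r
    using pg unfolding upd_def is_pivot_def by auto
  have piv_upd: "is_pivot zs (upd r) (piv r)" if "r \<in> set R" for r
    unfolding upd_def using reduced_is_pivot[OF R that] is_pivot_sdiff[OF _ pg] g(3) that
    by auto
  then have piv_upd_eq: "piv (upd r) = piv r" if "r \<in> set R" for r
    using that by (intro piv_eqI) blast
  have rows: "finite x \<and> x \<noteq> {}" if "x \<in> set (g # map upd R)" for x
  proof (cases "x = g")
    case False
    with that obtain r where r: "r \<in> set R" "x = upd r" by auto
    have "finite r" using R r(1) unfolding reduced_def by blast
    then have "finite (upd r)" using upd_sub[of r] g(1) by (auto intro: finite_subset)
    moreover have "upd r \<noteq> {}" using piv_upd[OF r(1)] unfolding is_pivot_def by auto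
    ultimately show ?thesis using r(2) by simp
  qed (use g in simp)
  have pivots: "piv x \<notin> y"
    if "x \<in> set (g # map upd R)" "y \<in> set (g # map upd R)" "x \<noteq> y" for x y
  proof (cases "x = g")
    case True
    with that obtain r where "y = upd r" by auto
    with True show ?thesis using p_upd unfolding p_def by simp
  next
    case False
    with that obtain r where r: "r \<in> set R" "x = upd r" by auto
    have "piv r \<notin> g" using g(3) r(1) by blast
    moreover have "piv r \<notin> r'" if "r' \<in> set R" "upd r \<noteq> upd r'" for r'
      using reduced_piv_notin[OF R r(1) that(1)] that(2) by auto
    ultimately show ?thesis
      using that(2,3) r upd_sub piv_upd_eq[OF r(1)] by auto
  qed
  have "reduced (set (g # map upd R))"
    unfolding reduced_def using rows pivots by blast
  moreover have "f2span (g # map upd R) = f2span (g # R)"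
    by (rule f2span_Cons_map_sdiff) (simp add: upd_def)
  ultimately show ?thesis by blast
qed

lemma reduced_exists:
  "\<forall>g\<in>set gs. finite g \<Longrightarrow> \<exists>R. reduced (set R) \<and> f2span R = f2span gs"
proof (induction gs)
  case Nil
  have "reduced (set [])" by (simp add: reduced_def)
  then show ?case by blast
next
  case (Cons g gs)
  then obtain R where R: "reduced (set R)" "f2span R = f2span gs"
    by auto
  then obtain v where v: "v \<in> f2span R" "\<forall>r\<in>set R. piv r \<notin> sdiff g v"
    using reduced_reduce by blast
  have span: "f2span (g # gs) = f2span (sdiff g v # R)"
    using f2span_Cons_cong[OF R(2), of g] f2span_Cons_sdiff[OF v(1), of g] by simp
  show ?case
  proof (cases "sdiff g v = {}")
    case True
    then show ?thesis
      using span R(1) f2span_Cons_absorb[of "{}" R] by auto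
  next
    case False
    have "finite v"
      by (rule finite_f2span_elem[OF v(1)]) (use R(1) in \<open>simp add: reduced_def\<close>)
    then have "finite (sdiff g v)"
      using Cons.prems by (simp add: sdiff_def)
    then obtain R' where "reduced (set R')" "f2span R' = f2span (sdiff g v # R)"
      using reduced_Cons_row[OF R(1) _ False v(2)] by blast
    with span show ?thesis by auto
  qed
qed

lemma rref_exists:
  assumes "\<forall>g\<in>set gs. finite g"
  shows "\<exists>R. rref R \<and> f2span R = f2span gs"
proof -
  obtain R where R: "reduced (set R)" "f2span R = f2span gs"
    using reduced_exists[OF assms] by blast
  have "folding_insort_key (\<lambda>s t. s = t \<or> colless zs s t) (colless zs) (set R) piv"
    by (intro folding_insort_key.intro colless_linorder folding_insort_key_axioms.intro
        reduced_inj_piv R(1))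
  then obtain l where l: "sorted_wrt (colless zs) (map piv l)" "set l = set R"
    by (rule folding_insort_key.finite_set_strict_sorted[OF _ order_refl finite_set])
  have "rref l"
    unfolding rref_def using l R(1) by simp
  moreover have "f2span l = f2span gs"
    using f2span_cong_set[OF l(2)] R(2) by simp
  ultimately show ?thesis by blast
qed

lemma is_rref_rows_iff:
  assumes fin: "\<forall>g\<in>set gs. finite g"
  shows "is_rref_rows zs gs R \<longleftrightarrow> rref R \<and> f2span R = f2span gs"
proof (cases "f2span R = f2span gs \<and> (\<forall>r\<in>set R. r \<noteq> {})")
  case False
  then show ?thesis
    unfolding is_rref_rows_def rref_def reduced_def by auto
next
  case True
  have rows: "finite r \<and> r \<noteq> {}" if "r \<in> set R" for r
    using finite_f2span_elem[OF _ fin] generator_in_f2span[OF that] True that by auto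
  have piv_iff: "is_pivot zs (R ! i) t \<longleftrightarrow> t = piv (R ! i)" if "i < length R" for i t
    using is_pivot_piv[of "R ! i"] rows[OF nth_mem[OF that]] piv_eqI by blast
  have "is_rref_rows zs gs R \<longleftrightarrow> sorted_wrt (colless zs) (map piv R) \<and>
      (\<forall>i<length R. \<forall>j<length R. i \<noteq> j \<longrightarrow> piv (R ! i) \<notin> R ! j)"
    unfolding is_rref_rows_def sorted_wrt_iff_nth_less using True
    by (auto simp: piv_iff)
  also have "\<dots> \<longleftrightarrow> sorted_wrt (colless zs) (map piv R) \<and>
      (\<forall>r\<in>set R. \<forall>r'\<in>set R. r \<noteq> r' \<longrightarrow> piv r \<notin> r')"
  proof -
    have "distinct R" if "sorted_wrt (colless zs) (map piv R)"
      using that linorder.strict_sorted_iff[OF colless_linorder, of "map piv R"]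
      by (simp add: distinct_map)
    then show ?thesis
      using distinct_pairs_nth[of R "\<lambda>r r'. piv r \<notin> r'"] by blast
  qed
  also have "\<dots> \<longleftrightarrow> rref R \<and> f2span R = f2span gs"
    unfolding rref_def reduced_def using True rows by auto
  finally show ?thesis .
qed

lemma LI_rref:
  assumes "\<forall>g\<in>set gs. finite g"
  shows "rref (LI zs gs)" "f2span (LI zs gs) = f2span gs"
proof -
  obtain R where R: "rref R" "f2span R = f2span gs"
    using rref_exists[OF assms] by blast
  have "LI zs gs = R"
    unfolding LI_def
  proof (rule the_equality)
    show "is_rref_rows zs gs R"
      using R is_rref_rows_iff[OF assms] by blast
    show "R' = R" if "is_rref_rows zs gs R'" for R'
      using that is_rref_rows_iff[OF assms] R rref_unique by simp
  qed
  with R show "rref (LI zs gs)" "f2span (LI zs gs) = f2span gs" by simp_all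
qed

lemma LI_f2span: "\<forall>g\<in>set gs. finite g \<Longrightarrow> f2span (LI zs gs) = f2span gs"
  by (rule LI_rref(2))

lemma LI_finite: "\<forall>g\<in>set gs. finite g \<Longrightarrow> \<forall>r\<in>set (LI zs gs). finite r"
  using LI_rref(1) unfolding rref_def reduced_def by blast

lemma LI_singleton: "\<forall>g\<in>set gs. finite g \<Longrightarrow> {t} \<in> f2span gs \<Longrightarrow> {t} \<in> set (LI zs gs)"
  using LI_rref reduced_singleton unfolding rref_def by metis

end

section \<open>Terms, weights and term orderings\<close>

lemma keep_div_sdiff: "keep_div zs (sdiff a b) = sdiff (keep_div zs a) (keep_div zs b)"
  by (auto simp: keep_div_def)

lemma keep_div_subset: "keep_div zs f \<subseteq> f"
  by (auto simp: keep_div_def)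

lemma keep_div_keep_div: "set zs' \<subseteq> set zs \<Longrightarrow> keep_div zs' (keep_div zs f) = keep_div zs' f"
  by (auto simp: keep_div_def)

lemma f2span_map_keep_div: "f2span (map (keep_div zs) gs) = keep_div zs ` f2span gs"
  by (rule f2span_map_linear) (simp add: keep_div_def, rule keep_div_sdiff)

lemma f2span_map_Lin: "f2span (map (Lin n) gs) = Lin n ` f2span gs"
  by (rule f2span_map_linear) (auto simp: Lin_def)

lemma inj_sqterm: "inj sqterm"
proof (rule injI)
  fix u v assume "sqterm u = sqterm v"
  then have "sqterm u i = sqterm v i" for i by simp
  then show "u = v" by (auto simp: sqterm_def) (metis zero_neq_one)+
qed

lemma f2span_map_canon: "f2span (map canon gs) = canon ` f2span gs"
proof (rule f2span_map_linear)
  show "canon (sdiff a b) = sdiff (canon a) (canon b)" for a b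
    unfolding canon_def sdiff_def by (simp add: image_Un image_set_diff[OF inj_sqterm])
qed (simp add: canon_def)

lemma tone_in_terms: "tone \<in> terms n"
  by (simp add: terms_def tone_def)

lemma var_in_terms: "z < n \<Longrightarrow> var z \<in> terms n"
  by (simp add: terms_def var_apply)

lemma sqterm_in_terms: "u \<subseteq> {..<n} \<Longrightarrow> sqterm u \<in> terms n"
  by (auto simp: terms_def sqterm_def)

lemma tmul_tone: "tmul tone t = t"
  by (simp add: tmul_def tone_def)

lemma wdeg_var: "z < n \<Longrightarrow> wdeg n W (var z) = W z"
  by (simp add: wdeg_def var_apply if_distrib sum.delta cong: if_cong)

lemma tdeg_var: "z < n \<Longrightarrow> tdeg n (var z) = 1"
  using wdeg_var[of z n "\<lambda>_. 1"] by (simp add: wdeg_def tdeg_def)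

lemma wdeg_tmul: "wdeg n W (tmul s t) = wdeg n W s + wdeg n W t"
  by (simp add: wdeg_def tmul_def distrib_left sum.distrib)

lemma tdeg_tmul: "tdeg n (tmul s t) = tdeg n s + tdeg n t"
  by (simp add: tdeg_def tmul_def sum.distrib)

lemma tdeg_pos:
  assumes "t \<in> terms n" "t \<noteq> tone"
  shows "0 < tdeg n t"
proof -
  obtain i where i: "t i \<noteq> 0"
    using assms(2) unfolding tone_def by auto
  have "i < n"
  proof (rule ccontr)
    assume "\<not> i < n"
    with assms(1) have "t i = 0" by (simp add: terms_def)
    with i show False by simp
  qed
  then have "t i \<le> tdeg n t"
    unfolding tdeg_def by (intro member_le_sum) simp_all
  with i show ?thesis by simp
qed

lemma wdeg_cong:
  assumes "\<And>i. i < n \<Longrightarrow> t i \<noteq> 0 \<Longrightarrow> W i = W' i"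
  shows "wdeg n W t = wdeg n W' t"
  unfolding wdeg_def
proof (rule sum.cong)
  show "W i * t i = W' i * t i" if "i \<in> {..<n}" for i
    using assms[of i] that by (cases "t i = 0") simp_all
qed simp

lemma wdeg_less:
  assumes W: "\<And>i. i < n \<Longrightarrow> t i \<noteq> 0 \<Longrightarrow> \<delta> * W i < d" and deg: "tdeg n t \<le> \<delta>" and "0 < d"
  shows "wdeg n W t < d"
proof (cases "tdeg n t = 0")
  case True
  then have "wdeg n W t = 0"
    unfolding tdeg_def wdeg_def by simp
  with \<open>0 < d\<close> show ?thesis by simp
next
  case False
  have "\<delta> * wdeg n W t = (\<Sum>i<n. (\<delta> * W i) * t i)"
    unfolding wdeg_def by (simp add: sum_distrib_left mult.assoc)
  also have "\<dots> \<le> (\<Sum>i<n. (d - 1) * t i)"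
  proof (rule sum_mono)
    show "\<delta> * W i * t i \<le> (d - 1) * t i" if "i \<in> {..<n}" for i
      using W[of i] that by (cases "t i = 0") simp_all
  qed
  also have "\<dots> = (d - 1) * tdeg n t"
    unfolding tdeg_def by (simp add: sum_distrib_left)
  also have "\<dots> \<le> (d - 1) * \<delta>"
    using deg by simp
  also have "\<dots> < d * \<delta>"
    using False deg \<open>0 < d\<close> by (intro mult_strict_right_mono) simp_all
  finally show ?thesis
    by (simp add: mult.commute)
qed

lemma weight_update_bound:
  fixes \<delta> w d :: nat
  assumes "\<delta> * w < d"
  shows "\<delta> * (if b then d else w) < \<delta> * d + 1"
proof (cases "b \<or> \<delta> = 0")
  case False
  then have "d \<le> \<delta> * d" by simp
  with assms have "\<delta> * w < \<delta> * d + 1" by linarith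
  with False show ?thesis by simp
qed auto

locale term_ordering =
  fixes n :: nat and lt :: "pterm \<Rightarrow> pterm \<Rightarrow> bool"
  assumes term_order: "term_order n lt"
begin

lemma lt_irrefl: "t \<in> terms n \<Longrightarrow> \<not> lt t t"
  using term_order unfolding term_order_def by blast

lemma lt_trans: "s \<in> terms n \<Longrightarrow> t \<in> terms n \<Longrightarrow> u \<in> terms n \<Longrightarrow> lt s t \<Longrightarrow> lt t u \<Longrightarrow> lt s u"
  using term_order unfolding term_order_def by (elim conjE) blast

lemma lt_total: "s \<in> terms n \<Longrightarrow> t \<in> terms n \<Longrightarrow> s \<noteq> t \<Longrightarrow> lt s t \<or> lt t s"
  using term_order unfolding term_order_def by (elim conjE) blast

lemma lt_tmul: "s \<in> terms n \<Longrightarrow> t \<in> terms n \<Longrightarrow> u \<in> terms n \<Longrightarrow> lt s t \<Longrightarrow> lt (tmul s u) (tmul t u)"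
  using term_order unfolding term_order_def by (elim conjE) blast

lemma lt_tone: "t \<in> terms n \<Longrightarrow> t \<noteq> tone \<Longrightarrow> lt tone t"
  using term_order unfolding term_order_def by (elim conjE) blast

lemma lt_asym: "s \<in> terms n \<Longrightarrow> t \<in> terms n \<Longrightarrow> lt s t \<Longrightarrow> \<not> lt t s"
  using lt_trans lt_irrefl by blast

lemma var_le_if_dvd:
  assumes t: "t \<in> terms n" and z: "z < n" "0 < t z"
  shows "t = var z \<or> lt (var z) t"
proof -
  define v where "v = (\<lambda>i. if i = z then t i - 1 else t i)"
  have v: "v \<in> terms n"
    using t z unfolding v_def terms_def by auto
  have t_eq: "tmul v (var z) = t"
    unfolding tmul_def v_def var_apply using z by auto
  show ?thesis
  proof (cases "v = tone")
    case False
    then have "lt (tmul tone (var z)) (tmul v (var z))"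
      using lt_tmul[OF tone_in_terms v var_in_terms[OF z(1)]] lt_tone[OF v] by blast
    then show ?thesis
      using t_eq by (simp add: tmul_tone)
  qed (use t_eq in \<open>simp add: tmul_tone\<close>)
qed

lemma ex_least_var:
  assumes "finite Z" "Z \<noteq> {}" "Z \<subseteq> {..<n}"
  shows "\<exists>z0\<in>Z. \<forall>z\<in>Z. z \<noteq> z0 \<longrightarrow> lt (var z0) (var z)"
proof -
  have "\<exists>p\<in>var ` Z. \<forall>x\<in>var ` Z. x \<noteq> p \<longrightarrow> lt p x"
    by (rule finite_has_least[OF _ _ _ lt_trans lt_total]) (use assms var_in_terms in auto)
  then show ?thesis by (auto simp: var_inject)
qed

text \<open>All surviving terms are multiples of indeterminates of Z, hence not below the least of
  them.\<close>
lemma keep_div_eq_LT: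
  assumes f: "f \<subseteq> terms n" "is_LT lt f (var z0)" and zs: "set zs \<subseteq> {..<n}" "z0 \<in> set zs"
    and least: "\<And>z. z \<in> set zs \<Longrightarrow> z \<noteq> z0 \<Longrightarrow> lt (var z0) (var z)"
  shows "keep_div zs f = {var z0}"
proof (intro equalityI subsetI)
  have z0: "var z0 \<in> terms n"
    using zs by (intro var_in_terms) auto
  fix t assume "t \<in> keep_div zs f"
  then obtain z where t: "t \<in> f" and z: "z \<in> set zs" "0 < t z"
    unfolding keep_div_def by blast
  have tn: "t \<in> terms n" and zn: "var z \<in> terms n"
    using t f(1) z(1) zs(1) by (auto intro: var_in_terms)
  show "t \<in> {var z0}"
  proof (rule ccontr)
    assume "t \<notin> {var z0}"
    then have "lt t (var z0)"
      using f(2) t unfolding is_LT_def by auto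
    moreover have "var z0 = t \<or> lt (var z0) t"
    proof -
      have "t = var z \<or> lt (var z) t"
        using var_le_if_dvd[OF tn _ z(2)] z(1) zs(1) by blast
      moreover have "z = z0 \<or> lt (var z0) (var z)"
        using least[OF z(1)] by blast
      ultimately show ?thesis
        using lt_trans[OF z0 zn tn] by blast
    qed
    ultimately show False
      using lt_asym[OF tn z0] lt_irrefl[OF tn] by blast
  qed
next
  fix t assume "t \<in> {var z0}"
  then show "t \<in> keep_div zs f"
    using f(2) zs(2) unfolding is_LT_def keep_div_def by (auto simp: var_apply)
qed

end

text \<open>Ties in W-degree are broken by total degree, so that 1 is the least term even when some
  weights vanish.\<close>
definition wlt :: "nat \<Rightarrow> (nat \<Rightarrow> nat) \<Rightarrow> pterm \<Rightarrow> pterm \<Rightarrow> bool" where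
  "wlt n W t u \<longleftrightarrow> wdeg n W t < wdeg n W u \<or>
     (wdeg n W t = wdeg n W u \<and> (tdeg n t < tdeg n u \<or> (tdeg n t = tdeg n u \<and> lex_gt u t)))"

lemma term_order_wlt: "term_order n (wlt n W)"
  unfolding term_order_def
proof (intro conjI ballI impI)
  show "\<not> wlt n W t t" for t
    unfolding wlt_def using lex_gt_irrefl by simp
  show "wlt n W s u" if "wlt n W s t" "wlt n W t u" for s t u
    using that lex_gt_trans unfolding wlt_def by (elim disjE conjE) auto
  show "wlt n W s t \<or> wlt n W t s" if "s \<noteq> t" for s t
    using lex_gt_total[OF that] unfolding wlt_def by arith
  show "wlt n W (tmul s u) (tmul t u)" if "wlt n W s t" for s t u
    using that unfolding wlt_def wdeg_tmul tdeg_tmul lex_gt_tmul by simp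
  have "wdeg n W tone = 0" "tdeg n tone = 0"
    by (simp_all add: wdeg_def tdeg_def tone_def)
  then show "wlt n W tone t" if "t \<in> terms n" "t \<noteq> tone" for t
    using tdeg_pos[OF that] unfolding wlt_def by auto
qed

lemma compatible_wlt: "compatible n W (wlt n W)"
  unfolding compatible_def wlt_def by simp

lemma finite_has_greatest_image:
  assumes J: "finite J" "J \<noteq> {}" "inj_on e J" "e ` J \<subseteq> A"
    and trans: "\<And>x y z. x \<in> A \<Longrightarrow> y \<in> A \<Longrightarrow> z \<in> A \<Longrightarrow> R x y \<Longrightarrow> R y z \<Longrightarrow> R x z"
    and total: "\<And>x y. x \<in> A \<Longrightarrow> y \<in> A \<Longrightarrow> x \<noteq> y \<Longrightarrow> R x y \<or> R y x"
  shows "\<exists>m\<in>J. \<forall>x\<in>J. x \<noteq> m \<longrightarrow> R (e x) (e m)"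
proof -
  have "\<exists>p\<in>e ` J. \<forall>x\<in>e ` J. x \<noteq> p \<longrightarrow> R x p"
  proof (rule finite_has_least[where R = "\<lambda>x y. R y x"])
    show "R z x" if "x \<in> A" "y \<in> A" "z \<in> A" "R y x" "R z y" for x y z
      using trans[OF that(3,2,1) that(5,4)] .
    show "R y x \<or> R x y" if "x \<in> A" "y \<in> A" "x \<noteq> y" for x y
      using total[OF that] by blast
  qed (use J in auto)
  then obtain m where m: "m \<in> J" "\<forall>x\<in>e ` J. x \<noteq> e m \<longrightarrow> R x (e m)"
    by blast
  have "R (e x) (e m)" if "x \<in> J" "x \<noteq> m" for x
  proof -
    have "e x \<noteq> e m"
      using inj_onD[OF J(3), of x m] that m(1) by auto
    with m(2) that(1) show ?thesis by blast
  qed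
  with m(1) show ?thesis by blast
qed

lemma inj_on_triangular:
  assumes diag: "\<And>z. z \<in> Z \<Longrightarrow> e z \<in> b z"
    and tri: "\<And>z z'. z \<in> Z \<Longrightarrow> z' \<in> Z \<Longrightarrow> z \<noteq> z' \<Longrightarrow> e z' \<in> b z \<Longrightarrow> R (e z') (e z)"
    and asym: "\<And>x y. x \<in> A \<Longrightarrow> y \<in> A \<Longrightarrow> R x y \<Longrightarrow> \<not> R y x" and A: "e ` Z \<subseteq> A"
  shows "inj_on b Z"
proof (rule inj_onI)
  fix x y assume xy: "x \<in> Z" "y \<in> Z" "b x = b y"
  show "x = y"
  proof (rule ccontr)
    assume "x \<noteq> y"
    moreover have "e x \<in> b y" "e y \<in> b x"
      using diag xy by auto
    ultimately have "R (e x) (e y)" "R (e y) (e x)"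
      using tri[of y x] tri[of x y] xy by auto
    moreover have "e x \<in> A" "e y \<in> A"
      using A xy by auto
    ultimately show False
      using asym by blast
  qed
qed

text \<open>In a nonempty sum of members of a triangular family, the largest marker survives.\<close>
lemma f2indep_triangular:
  assumes fin: "finite Z" and inj: "inj_on e Z" and A: "e ` Z \<subseteq> A"
    and diag: "\<And>z. z \<in> Z \<Longrightarrow> e z \<in> b z"
    and tri: "\<And>z z'. z \<in> Z \<Longrightarrow> z' \<in> Z \<Longrightarrow> z \<noteq> z' \<Longrightarrow> e z' \<in> b z \<Longrightarrow> R (e z') (e z)"
    and trans: "\<And>x y z. x \<in> A \<Longrightarrow> y \<in> A \<Longrightarrow> z \<in> A \<Longrightarrow> R x y \<Longrightarrow> R y z \<Longrightarrow> R x z"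
    and total: "\<And>x y. x \<in> A \<Longrightarrow> y \<in> A \<Longrightarrow> x \<noteq> y \<Longrightarrow> R x y \<or> R y x"
    and asym: "\<And>x y. x \<in> A \<Longrightarrow> y \<in> A \<Longrightarrow> R x y \<Longrightarrow> \<not> R y x"
  shows "f2indep (b ` Z)"
  unfolding f2indep_def
proof (intro conjI allI impI)
  show "finite (b ` Z)" using fin by simp
  fix C assume C: "C \<subseteq> b ` Z" "C \<noteq> {}"
  define J where "J = {z\<in>Z. b z \<in> C}"
  have J: "finite J" "J \<noteq> {}" "J \<subseteq> Z"
    using fin C unfolding J_def by auto
  moreover have "e ` J \<subseteq> A"
    using A J(3) by auto
  ultimately have "\<exists>m\<in>J. \<forall>x\<in>J. x \<noteq> m \<longrightarrow> R (e x) (e m)"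
    by (intro finite_has_greatest_image[OF _ _ inj_on_subset[OF inj J(3)] _ trans total])
  then obtain m where m: "m \<in> J" "\<And>x. x \<in> J \<Longrightarrow> x \<noteq> m \<Longrightarrow> R (e x) (e m)"
    by blast
  have "{c\<in>C. e m \<in> c} = {b m}"
  proof (intro equalityI subsetI)
    fix c assume c: "c \<in> {c\<in>C. e m \<in> c}"
    then obtain j where j: "j \<in> J" "c = b j"
      using C(1) unfolding J_def by auto
    have "j = m"
    proof (rule ccontr)
      assume "j \<noteq> m"
      then have "R (e m) (e j)" "R (e j) (e m)"
        using tri[of j m] m(2)[of j] j c m(1) J(3) by auto
      then show False
        using asym[of "e m" "e j"] A J(3) m(1) j(1) by auto
    qed
    with j show "c \<in> {b m}" by simp
  qed (use m(1) diag J(3) J_def in auto)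
  then have "e m \<in> setsum2 C"
    unfolding setsum2_def by simp
  then show "setsum2 C \<noteq> {}" by blast
qed

section \<open>Correctness of CHECK\<close>

declare check_loop.simps [simp del]

lemma check_loop_Cons:
  assumes "zs \<noteq> []" "R = LI zs L" "zt = filter (\<lambda>z. {var z} \<in> set R) zs"
    "zs' = filter (\<lambda>z. z \<notin> set zt) zs"
  shows "check_loop \<delta> zs L d w = (if zt = [] then None
    else check_loop \<delta> zs' (map (keep_div zs') R) (\<delta> * d + 1) (\<lambda>k. if k \<in> set zt then d else w k))"
  by (subst check_loop.simps) (simp add: assms Let_def)

lemma LI_keep_div:
  assumes "distinct zs" "\<forall>g\<in>set L. finite g" "f2span L = keep_div zs ` S" "set zs' \<subseteq> set zs"
  shows "f2span (map (keep_div zs') (LI zs L)) = keep_div zs' ` S"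
    and "\<forall>g\<in>set (map (keep_div zs') (LI zs L)). finite g"
proof -
  interpret column_order zs
    using assms(1) by (rule column_order.intro)
  have "f2span (map (keep_div zs') (LI zs L)) = keep_div zs' ` keep_div zs ` S"
    using assms(3) by (simp add: f2span_map_keep_div LI_f2span[OF assms(2)])
  then show "f2span (map (keep_div zs') (LI zs L)) = keep_div zs' ` S"
    by (simp add: image_image keep_div_keep_div[OF assms(4)])
  show "\<forall>g\<in>set (map (keep_div zs') (LI zs L)). finite g"
    using LI_finite[OF assms(2)] by (auto intro: finite_subset[OF keep_div_subset])
qed

locale check_input =
  fixes n :: nat and G :: "ppoly list"
  assumes finite_G: "\<forall>g\<in>set G. finite g" and G_terms: "\<forall>g\<in>set G. g \<subseteq> terms n"
begin

lemma f2span_G_terms: "v \<in> f2span G \<Longrightarrow> v \<subseteq> terms n"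
  using f2span_subset_Union G_terms by blast

lemma singleton_row_exists:
  assumes lt: "term_order n lt" and zs: "distinct zs" "zs \<noteq> []" "set zs \<subseteq> {..<n}"
    and L: "\<forall>g\<in>set L. finite g" "f2span L = keep_div zs ` f2span G"
    and LT: "\<forall>z\<in>set zs. \<exists>f\<in>f2span G. is_LT lt f (var z)"
  shows "\<exists>z\<in>set zs. {var z} \<in> set (LI zs L)"
proof -
  interpret term_ordering n lt
    using lt by (rule term_ordering.intro)
  interpret column_order zs
    using zs(1) by (rule column_order.intro)
  obtain z0 where z0: "z0 \<in> set zs" "\<And>z. z \<in> set zs \<Longrightarrow> z \<noteq> z0 \<Longrightarrow> lt (var z0) (var z)"
    using ex_least_var[of "set zs"] zs(2,3) by auto
  obtain f where f: "f \<in> f2span G" "is_LT lt f (var z0)"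
    using LT z0(1) by blast
  have "keep_div zs f = {var z0}"
    by (rule keep_div_eq_LT[OF f2span_G_terms[OF f(1)] f(2) zs(3) z0])
  then have "{var z0} \<in> f2span L"
    using L(2) f(1) by force
  then show ?thesis
    using LI_singleton[OF L(1)] z0(1) by blast
qed

lemma check_loop_not_None:
  assumes lt: "term_order n lt"
  shows "distinct zs \<Longrightarrow> set zs \<subseteq> {..<n} \<Longrightarrow> \<forall>g\<in>set L. finite g \<Longrightarrow>
    f2span L = keep_div zs ` f2span G \<Longrightarrow> \<forall>z\<in>set zs. \<exists>f\<in>f2span G. is_LT lt f (var z) \<Longrightarrow>
    check_loop \<delta> zs L d w \<noteq> None"
proof (induction \<delta> zs L d w rule: check_loop.induct)
  case (1 \<delta> zs L d w)
  show ?case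
  proof (cases "zs = []")
    case True
    then show ?thesis by (simp add: check_loop.simps)
  next
    case False
    define R where "R = LI zs L"
    define zt where "zt = filter (\<lambda>z. {var z} \<in> set R) zs"
    define zs' where "zs' = filter (\<lambda>z. z \<notin> set zt) zs"
    have zt: "zt \<noteq> []"
      using singleton_row_exists[OF lt 1(2) False 1(3-6)]
      unfolding zt_def R_def filter_empty_conv by blast
    have "set zs' \<subseteq> set zs"
      unfolding zs'_def by auto
    then have "check_loop \<delta> zs' (map (keep_div zs') R) (\<delta> * d + 1)
        (\<lambda>k. if k \<in> set zt then d else w k) \<noteq> None"
      using 1(1)[OF False R_def zt_def zt, folded zs'_def] 1(2-6)
        LI_keep_div[OF 1(2,4,5), of zs'] unfolding R_def zs'_def by auto
    with zt show ?thesis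
      by (simp add: check_loop_Cons[OF False R_def zt_def zs'_def])
  qed
qed

text \<open>The loop invariant of CHECK for an indeterminate z already removed from zs.\<close>
definition isolated :: "(nat \<Rightarrow> nat) \<Rightarrow> nat list \<Rightarrow> nat \<Rightarrow> bool" where
  "isolated w zs z \<longleftrightarrow> (\<exists>f\<in>f2span G. var z \<in> f \<and>
     (\<forall>t\<in>f. t \<noteq> var z \<longrightarrow> (\<forall>j\<in>set zs. t j = 0) \<and> wdeg n w t < w z))"

lemma isolated_mono:
  assumes iso: "isolated w zs z" and zs': "set zs' \<subseteq> set zs" and z: "z \<notin> set zs"
    and w': "\<And>i. i \<notin> set zs \<Longrightarrow> w' i = w i"
  shows "isolated w' zs' z"
proof -
  obtain f where f: "f \<in> f2span G" "var z \<in> f"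
    "\<And>t. t \<in> f \<Longrightarrow> t \<noteq> var z \<Longrightarrow> (\<forall>j\<in>set zs. t j = 0) \<and> wdeg n w t < w z"
    using iso unfolding isolated_def by blast
  have "wdeg n w' t = wdeg n w t" if "t \<in> f" "t \<noteq> var z" for t
  proof (rule wdeg_cong)
    show "w' i = w i" if "t i \<noteq> 0" for i
      using f(3)[OF \<open>t \<in> f\<close> \<open>t \<noteq> var z\<close>] that w' by metis
  qed
  then show ?thesis
    unfolding isolated_def using f zs' w'[OF z] by (intro bexI[of _ f]) auto
qed

lemma isolated_new:
  assumes "{var z} \<in> keep_div zs ` f2span G" and "w z = d" "0 < d"
    and w: "\<And>i. i \<notin> set zs \<Longrightarrow> \<delta> * w i < d"
    and deg: "\<forall>v\<in>f2span G. \<forall>t\<in>v. tdeg n t \<le> \<delta>" and "set zs' \<subseteq> set zs"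
  shows "isolated w zs' z"
proof -
  obtain f where f: "f \<in> f2span G" "keep_div zs f = {var z}"
    using assms(1) by auto
  have "(\<forall>j\<in>set zs. t j = 0) \<and> wdeg n w t < d" if "t \<in> f" "t \<noteq> var z" for t
  proof
    have "t \<notin> keep_div zs f"
      using that(2) f(2) by simp
    with that(1) show coprime: "\<forall>j\<in>set zs. t j = 0"
      unfolding keep_div_def by auto
    show "wdeg n w t < d"
    proof (rule wdeg_less)
      show "\<delta> * w i < d" if "t i \<noteq> 0" for i
        using coprime that by (intro w) auto
      show "tdeg n t \<le> \<delta>"
        using deg f(1) \<open>t \<in> f\<close> by blast
    qed (rule \<open>0 < d\<close>)
  qed
  then have "\<forall>t\<in>f. t \<noteq> var z \<longrightarrow> (\<forall>j\<in>set zs'. t j = 0) \<and> wdeg n w t < w z"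
    using \<open>w z = d\<close> \<open>set zs' \<subseteq> set zs\<close> by blast
  moreover have "var z \<in> f"
    using f(2) keep_div_subset by blast
  ultimately show ?thesis
    unfolding isolated_def using f(1) by blast
qed

lemma isolated_LT:
  assumes "isolated W [] z" "compatible n W lt" "z < n"
  shows "\<exists>F\<in>f2span G. is_LT lt F (var z)"
proof -
  obtain F where F: "F \<in> f2span G" "var z \<in> F" "\<And>t. t \<in> F \<Longrightarrow> t \<noteq> var z \<Longrightarrow> wdeg n W t < W z"
    using assms(1) unfolding isolated_def by auto
  have "lt t (var z)" if "t \<in> F" "t \<noteq> var z" for t
  proof -
    have "wdeg n W t < wdeg n W (var z)"
      using F(3)[OF that] wdeg_var[OF assms(3)] by simp
    moreover have "t \<in> terms n"
      using f2span_G_terms[OF F(1)] that(1) by blast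
    ultimately show ?thesis
      using assms(2) var_in_terms[OF assms(3)] unfolding compatible_def by blast
  qed
  then show ?thesis
    unfolding is_LT_def using F(1,2) by blast
qed

lemma isolated_update:
  assumes L: "f2span L = keep_div zs ` f2span G"
    and deg: "\<forall>v\<in>f2span G. \<forall>t\<in>v. tdeg n t \<le> \<delta>" and w: "\<forall>i. \<delta> * w i < d"
    and iso: "\<forall>z\<in>set zs0 - set zs. isolated w zs z"
    and zt: "set zt \<subseteq> set zs" "\<forall>z\<in>set zt. {var z} \<in> f2span L"
    and zs': "set zs' = set zs - set zt" and z: "z \<in> set zs0 - set zs'"
  shows "isolated (\<lambda>k. if k \<in> set zt then d else w k) zs' z"
proof (cases "z \<in> set zt")
  case True
  have "0 < d"
    using w by (metis gr_zeroI less_nat_zero_code)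
  with True show ?thesis
    using zt L deg w zs' by (intro isolated_new[where \<delta> = \<delta> and zs = zs]) auto
next
  case False
  with z zs' have old: "z \<in> set zs0 - set zs" by blast
  then show ?thesis
    by (rule isolated_mono[OF iso[rule_format]]) (use zt(1) zs' old in auto)
qed

lemma check_loop_sound:
  "check_loop \<delta> zs L d w = Some W \<Longrightarrow> distinct zs \<Longrightarrow> set zs \<subseteq> set zs0 \<Longrightarrow>
    \<forall>g\<in>set L. finite g \<Longrightarrow> f2span L = keep_div zs ` f2span G \<Longrightarrow>
    \<forall>v\<in>f2span G. \<forall>t\<in>v. tdeg n t \<le> \<delta> \<Longrightarrow> \<forall>i. \<delta> * w i < d \<Longrightarrow>
    \<forall>z\<in>set zs0 - set zs. isolated w zs z \<Longrightarrow> \<forall>z\<in>set zs0. isolated W [] z"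
proof (induction \<delta> zs L d w rule: check_loop.induct)
  case (1 \<delta> zs L d w)
  show ?case
  proof (cases "zs = []")
    case True
    with 1(2,9) show ?thesis by (simp add: check_loop.simps)
  next
    case False
    interpret column_order zs
      using 1(3) by (rule column_order.intro)
    define R where "R = LI zs L"
    define zt where "zt = filter (\<lambda>z. {var z} \<in> set R) zs"
    define zs' where "zs' = filter (\<lambda>z. z \<notin> set zt) zs"
    have zt: "zt \<noteq> []" and rec: "check_loop \<delta> zs' (map (keep_div zs') R) (\<delta> * d + 1)
        (\<lambda>k. if k \<in> set zt then d else w k) = Some W"
      using 1(2) check_loop_Cons[OF False R_def zt_def zs'_def] by (simp_all split: if_splits)
    have zs': "set zs' = set zs - set zt" "set zt \<subseteq> set zs"
      unfolding zs'_def zt_def by auto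
    have rows: "\<forall>z\<in>set zt. {var z} \<in> f2span L"
      using generator_in_f2span LI_f2span[OF 1(5)] unfolding zt_def R_def by fastforce
    have dist: "distinct zs'" and sub0: "set zs' \<subseteq> set zs0" and sub: "set zs' \<subseteq> set zs"
      unfolding zs'_def using 1(3,4) by auto
    have iso: "\<forall>z\<in>set zs0 - set zs'. isolated (\<lambda>k. if k \<in> set zt then d else w k) zs' z"
      using isolated_update[OF 1(6-9) zs'(2) rows zs'(1)] by blast
    have weights: "\<forall>i. \<delta> * (if i \<in> set zt then d else w i) < \<delta> * d + 1"
      using 1(8) weight_update_bound by blast
    note step = LI_keep_div[OF 1(3,5,6) sub, folded R_def]
    show ?thesis
      by (rule 1(1)[OF False R_def zt_def zt, folded zs'_def,
            OF rec dist sub0 step(2) step(1) 1(7) weights iso])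
  qed
qed

lemma tdeg_le_Max: "v \<in> f2span G \<Longrightarrow> t \<in> v \<Longrightarrow> tdeg n t \<le> Max (insert 0 (tdeg n ` \<Union>(set G)))"
  using f2span_subset_Union[of v G] finite_G by (intro Max_ge) auto

lemma finite_map_keep_div: "\<forall>g\<in>set (map (keep_div zs) G). finite g"
  using finite_G by (auto intro: finite_subset[OF keep_div_subset])

lemma CHECK_eq: "CHECK n G zs =
  (if f2dim (map (Lin n) (map (keep_div zs) G)) < length zs then None
   else check_loop (Max (insert 0 (tdeg n ` \<Union>(set G)))) zs (map (keep_div zs) G) 1 (\<lambda>_. 0))"
  by (simp add: CHECK_def Let_def)

lemma CHECK_Some_LT:
  assumes W: "CHECK n G zs = Some W" and zs: "distinct zs" "set zs \<subseteq> {..<n}"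
    and compat: "compatible n W lt" and z: "z \<in> set zs"
  shows "\<exists>F\<in>f2span G. is_LT lt F (var z)"
proof -
  have "check_loop (Max (insert 0 (tdeg n ` \<Union>(set G)))) zs (map (keep_div zs) G) 1 (\<lambda>_. 0) = Some W"
    using W by (simp add: CHECK_eq split: if_splits)
  then have "\<forall>z\<in>set zs. isolated W [] z"
    by (rule check_loop_sound[OF _ zs(1) order_refl finite_map_keep_div f2span_map_keep_div])
      (auto intro: tdeg_le_Max)
  with z zs(2) compat show ?thesis
    by (intro isolated_LT) auto
qed

lemma f2dim_bound:
  assumes lt: "term_order n lt" and zs: "distinct zs" "set zs \<subseteq> {..<n}"
    and LT: "\<forall>z\<in>set zs. \<exists>F\<in>f2span G. is_LT lt F (var z)"
  shows "length zs \<le> f2dim (map (Lin n) (map (keep_div zs) G))"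
proof -
  interpret term_ordering n lt
    using lt by (rule term_ordering.intro)
  obtain F where F: "\<And>z. z \<in> set zs \<Longrightarrow> F z \<in> f2span G \<and> is_LT lt (F z) (var z)"
    using bchoice[OF LT[unfolded Bex_def]] by blast
  define b where "b z = Lin n (keep_div zs (F z))" for z
  have diag: "var z \<in> b z" if "z \<in> set zs" for z
    using F[OF that] that zs(2) tdeg_var
    unfolding b_def Lin_def keep_div_def is_LT_def by (auto simp: var_apply)
  have tri: "lt (var z') (var z)" if "z \<in> set zs" "z' \<in> set zs" "z \<noteq> z'" "var z' \<in> b z" for z z'
  proof -
    have "var z' \<in> F z" "var z' \<noteq> var z"
      using that(3,4) keep_div_subset unfolding b_def Lin_def by (auto simp: var_inject)
    then show ?thesis
      using F[OF that(1)] unfolding is_LT_def by blast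
  qed
  have "inj_on var (set zs)" "var ` set zs \<subseteq> terms n"
    using zs(2) var_in_terms by (auto simp: inj_on_def var_inject)
  note vars = this
  have indep: "inj_on b (set zs)" "f2indep (b ` set zs)"
    using inj_on_triangular[where e = var and R = lt, OF diag tri lt_asym vars(2)]
      f2indep_triangular[where e = var and R = lt, OF finite_set vars diag tri lt_trans lt_total lt_asym]
    by auto
  have "b ` set zs \<subseteq> f2span (map (Lin n) (map (keep_div zs) G))"
    unfolding f2span_map_Lin f2span_map_keep_div b_def using F by blast
  then have "card (b ` set zs) \<le> f2dim (map (Lin n) (map (keep_div zs) G))"
    using indep(2) by (rule f2indep_card_le_f2dim)
  moreover have "card (b ` set zs) = length zs"
    using card_image[OF indep(1)] distinct_card[OF zs(1)] by simp
  ultimately show ?thesis by simp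
qed

lemma CHECK_not_None:
  assumes lt: "term_order n lt" and zs: "distinct zs" "set zs \<subseteq> {..<n}"
    and LT: "\<forall>z\<in>set zs. \<exists>F\<in>f2span G. is_LT lt F (var z)"
  shows "CHECK n G zs \<noteq> None"
  using f2dim_bound[OF assms]
    check_loop_not_None[OF lt zs finite_map_keep_div f2span_map_keep_div LT]
  by (simp add: CHECK_eq)

end

lemma bmul_empty: "bmul {} g = {}"
  by (simp add: bmul_def)

lemma bmul_one: "bmul {{}} g = g"
proof (rule set_eqI)
  fix u
  have "{(a, b). a \<in> {{}} \<and> b \<in> g \<and> a \<union> b = u} = (if u \<in> g then {({}, u)} else {})"
    by auto
  then show "u \<in> bmul {{}} g \<longleftrightarrow> u \<in> g"
    by (simp add: bmul_def)
qed

lemma f2span_subset_bideal: "f2span gs \<subseteq> bideal n (gs :: bpoly list)"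
proof
  fix v assume "v \<in> f2span gs"
  then obtain cs where cs: "length cs = length gs"
    "v = lsum (map2 (\<lambda>c g. if c then g else {}) cs gs)"
    unfolding f2span_def by auto
  define hs :: "bpoly list" where "hs = map (\<lambda>c. if c then {{}} else {}) cs"
  have "map2 bmul hs gs = map2 (\<lambda>c g. if c then g else {}) cs gs"
    unfolding hs_def using cs(1)
    by (induction cs gs rule: list_induct2) (simp_all add: bmul_empty bmul_one)
  moreover have "length hs = length gs" "set hs \<subseteq> bpolys n"
    unfolding hs_def bpolys_def using cs(1) by auto
  ultimately show "v \<in> bideal n gs"
    unfolding bideal_def using cs(2) by (intro CollectI exI[of _ hs]) simp
qed

lemma list_witnesses_iff:
  "(\<exists>fs. length fs = length zs \<and> set fs \<subseteq> A \<and> (\<forall>i<length zs. P (fs ! i) (zs ! i))) \<longleftrightarrow>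
    (\<forall>z\<in>set zs. \<exists>f\<in>A. P f z)"
proof
  assume "\<exists>fs. length fs = length zs \<and> set fs \<subseteq> A \<and> (\<forall>i<length zs. P (fs ! i) (zs ! i))"
  then show "\<forall>z\<in>set zs. \<exists>f\<in>A. P f z"
    by (metis in_set_conv_nth nth_mem subsetD)
next
  assume "\<forall>z\<in>set zs. \<exists>f\<in>A. P f z"
  then have "(SOME f. f \<in> A \<and> P f z) \<in> A \<and> P (SOME f. f \<in> A \<and> P f z) z" if "z \<in> set zs" for z
    using that by (metis (mono_tags, lifting) someI_ex)
  then show "\<exists>fs. length fs = length zs \<and> set fs \<subseteq> A \<and> (\<forall>i<length zs. P (fs ! i) (zs ! i))"
    by (intro exI[of _ "map (\<lambda>z. SOME f. f \<in> A \<and> P f z) zs"]) auto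
qed

theorem proposition6p4:
  fixes n :: nat and gs :: "bpoly list" and zs :: "nat list"
  assumes gs_in: "set gs \<subseteq> bpolys n"
    and proper: "bideal n gs \<noteq> bpolys n"
    and zs_distinct: "distinct zs"
    and zs_vars: "set zs \<subseteq> {..<n}"
  shows "(CHECK n (map canon gs) zs \<noteq> None \<longleftrightarrow>
           (\<exists>fs. set fs \<subseteq> f2span gs \<and> Z_separating n (bideal n gs) zs fs)) \<and>
         (\<forall>W lt. CHECK n (map canon gs) zs = Some W \<longrightarrow>
           term_order n lt \<longrightarrow> compatible n W lt \<longrightarrow>
           (\<exists>fs. length fs = length zs \<and> set fs \<subseteq> f2span gs \<and>
              (\<forall>i<length zs. is_LT lt (canon (fs ! i)) (var (zs ! i)))))"
proof -
  interpret check_input n "map canon gs"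
    using gs_in by unfold_locales (auto simp: bpolys_def canon_def intro: sqterm_in_terms)
  let ?sep = "\<lambda>lt. \<exists>fs. length fs = length zs \<and> set fs \<subseteq> f2span gs \<and>
    (\<forall>i<length zs. is_LT lt (canon (fs ! i)) (var (zs ! i)))"
  have sep_iff: "?sep lt \<longleftrightarrow> (\<forall>z\<in>set zs. \<exists>F\<in>f2span (map canon gs). is_LT lt F (var z))" for lt
    using list_witnesses_iff[of zs "f2span gs" "\<lambda>f z. is_LT lt (canon f) (var z)"]
    unfolding f2span_map_canon by blast
  have sep: "?sep lt" if "CHECK n (map canon gs) zs = Some W" "compatible n W lt" for W lt
    unfolding sep_iff using CHECK_Some_LT[OF that(1) zs_distinct zs_vars that(2)] by blast
  have "CHECK n (map canon gs) zs \<noteq> None \<longleftrightarrow> (\<exists>lt. term_order n lt \<and> ?sep lt)"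
    using sep[OF _ compatible_wlt] term_order_wlt CHECK_not_None[OF _ zs_distinct zs_vars]
    unfolding sep_iff by blast
  also have "\<dots> \<longleftrightarrow> (\<exists>fs. set fs \<subseteq> f2span gs \<and> Z_separating n (bideal n gs) zs fs)"
    unfolding Z_separating_def using f2span_subset_bideal by blast
  finally show ?thesis
    using sep by blast
qed

end
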